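(* Let $(\mathcal{X},\mathcal{B})$ be a $2$-IPPS$(4,v)$ such that (i) $|B_1\cap B_2|\le 2$ for all distinct $B_1,B_2\in\mathcal{B}$, and (ii) for every $B\in\mathcal{B}$ and every $x\in B$ there exists $B'\in\mathcal{B}\setminus\{B\}$ with $x\in B'$. Then $$\big|\{B\in\mathcal{B}:\ \exists\,B'\in\mathcal{B}\setminus\{B\}\text{ with }|B\cap B'|=2\}\big|\le v-1.$$
   Context: A $(w,v)$ set system is a pair $(\mathcal{X},\mathcal{B})$ with $|\mathcal{X}|=v$ and $\mathcal{B}$ a family of $w$-element subsets (blocks) of $\mathcal{X}$. For a $w$-subset $T\subseteq\mathcal{X}$ let $P_t(T)=\{\mathcal{P}\subseteq\mathcal{B}: |\mathcal{P}|\le t,\ T\subseteq\bigcup_{B\in\mathcal{P}}B\}$. The set system is a $t$-IPPS$(w,v)$ if for every $w$-subset $T\subseteq\mathcal{X}$, either $P_t(T)=\emptyset$ or $\bigcap_{\mathcal{P}\in P_t(T)}\mathcal{P}\neq\emptyset$. *)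

theory Defs
  imports Main
begin

definition set_system :: "nat \<Rightarrow> nat \<Rightarrow> 'a set \<Rightarrow> 'a set set \<Rightarrow> bool" where
  "set_system w v X B \<longleftrightarrow> finite X \<and> card X = v \<and>
     (\<forall>b\<in>B. b \<subseteq> X \<and> card b = w)"

definition P_t :: "nat \<Rightarrow> 'a set set \<Rightarrow> 'a set \<Rightarrow> 'a set set set" where
  "P_t t B T = {P. P \<subseteq> B \<and> card P \<le> t \<and> T \<subseteq> \<Union>P}"

definition IPPS :: "nat \<Rightarrow> nat \<Rightarrow> nat \<Rightarrow> 'a set \<Rightarrow> 'a set set \<Rightarrow> bool" where
  "IPPS t w v X B \<longleftrightarrow> set_system w v X B \<and>
     (\<forall>T. T \<subseteq> X \<and> card T = w \<longrightarrow> P_t t B T = {} \<or> \<Inter>(P_t t B T) \<noteq> {})"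

end

theory Submission
  imports Defs
begin

text \<open>Suppose distinct blocks \<open>b\<^sub>1, b\<^sub>2\<close> share at least \<open>w - 2\<close> points. Pick \<open>a \<in> b\<^sub>1 - b\<^sub>2\<close>,
  \<open>e \<in> b\<^sub>2 - b\<^sub>1\<close>, further blocks \<open>y\<^sub>1 \<ni> a\<close> and \<open>y\<^sub>2 \<ni> e\<close> other than \<open>b\<^sub>1\<close> resp. \<open>b\<^sub>2\<close>, and let
  \<open>T\<close> consist of \<open>a\<close>, \<open>e\<close> and \<open>w - 2\<close> common points. Then the pairs \<open>{b\<^sub>1, b\<^sub>2}\<close>, \<open>{b\<^sub>1, y\<^sub>2}\<close>
  and \<open>{y\<^sub>1, b\<^sub>2}\<close> all cover \<open>T\<close> but have no block in common, contradicting the IPPS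
  property. So under hypothesis (ii) no two blocks meet in two points and the
  counted set is empty.\<close>

lemma pair_in_P_t:
  assumes "2 \<le> t" "p \<in> B" "q \<in> B" "T \<subseteq> p \<union> q"
  shows "{p, q} \<in> P_t t B T"
  using assms unfolding P_t_def by (auto simp: card_insert_if)

lemma IPPS_Inter_P_t_nonempty:
  assumes "IPPS t w v X B" "T \<subseteq> X" "card T = w" "P \<in> P_t t B T"
  shows "\<Inter>(P_t t B T) \<noteq> {}"
  using assms unfolding IPPS_def by blast

lemma Diff_nonempty_if_card_eq:
  assumes "finite A" "card A = card C" "A \<noteq> C"
  shows "C - A \<noteq> {}"
  using assms by (metis Diff_eq_empty_iff card_subset_eq)

lemma IPPS_card_block_inter_less:
  assumes ipps: "IPPS t w v X B" and "2 \<le> t" "2 \<le> w"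
    and cov: "\<forall>b\<in>B. \<forall>x\<in>b. \<exists>b'\<in>B - {b}. x \<in> b'"
    and b1: "b1 \<in> B" and b2: "b2 \<in> B" and "b1 \<noteq> b2"
  shows "card (b1 \<inter> b2) + 2 < w"
proof (rule ccontr)
  assume "\<not> card (b1 \<inter> b2) + 2 < w"
  then have common: "w - 2 \<le> card (b1 \<inter> b2)" by linarith
  have "finite X" and X: "b1 \<subseteq> X" "b2 \<subseteq> X" and card_b: "card b1 = w" "card b2 = w"
    using ipps b1 b2 unfolding IPPS_def set_system_def by auto
  then have fin: "finite b1" "finite b2" using finite_subset by auto
  obtain a where a: "a \<in> b1" "a \<notin> b2"
    using Diff_nonempty_if_card_eq[of b2 b1] fin card_b \<open>b1 \<noteq> b2\<close> by auto
  obtain e where e: "e \<in> b2" "e \<notin> b1"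
    using Diff_nonempty_if_card_eq[of b1 b2] fin card_b \<open>b1 \<noteq> b2\<close> by auto
  obtain y1 where y1: "y1 \<in> B" "y1 \<noteq> b1" "a \<in> y1" using cov b1 a by blast
  obtain y2 where y2: "y2 \<in> B" "y2 \<noteq> b2" "e \<in> y2" using cov b2 e by blast
  obtain S where S: "S \<subseteq> b1 \<inter> b2" "card S = w - 2"
    using obtain_subset_with_card_n[OF common] by blast
  define T where "T = insert a (insert e S)"
  have "finite S" using S fin finite_subset by blast
  moreover have "a \<notin> insert e S" "e \<notin> S" using S a e by auto
  ultimately have "card T = card S + 2" unfolding T_def by simp
  then have card_T: "card T = w" using S(2) \<open>2 \<le> w\<close> by simp
  have "T \<subseteq> X" unfolding T_def using S a e X by auto
  have P1: "{b1, b2} \<in> P_t t B T"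
    by (rule pair_in_P_t) (use \<open>2 \<le> t\<close> b1 b2 S a e in \<open>auto simp: T_def\<close>)
  have P2: "{b1, y2} \<in> P_t t B T"
    by (rule pair_in_P_t) (use \<open>2 \<le> t\<close> b1 y2 S a in \<open>auto simp: T_def\<close>)
  have P3: "{y1, b2} \<in> P_t t B T"
    by (rule pair_in_P_t) (use \<open>2 \<le> t\<close> y1 b2 S e in \<open>auto simp: T_def\<close>)
  have "\<Inter>(P_t t B T) \<subseteq> {b1, b2} \<inter> {b1, y2} \<inter> {y1, b2}"
    using P1 P2 P3 by blast
  also have "\<dots> = {}" using \<open>b1 \<noteq> b2\<close> y1 y2 by auto
  finally show False
    using IPPS_Inter_P_t_nonempty[OF ipps \<open>T \<subseteq> X\<close> card_T P1] by blast
qed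

theorem lemma5:
  fixes X :: "'a set" and B :: "'a set set" and v :: nat
  assumes "IPPS 2 4 v X B"
    and "\<forall>B1\<in>B. \<forall>B2\<in>B. B1 \<noteq> B2 \<longrightarrow> card (B1 \<inter> B2) \<le> 2"
    and "\<forall>b\<in>B. \<forall>x\<in>b. \<exists>b'\<in>B - {b}. x \<in> b'"
  shows "card {b\<in>B. \<exists>b'\<in>B - {b}. card (b \<inter> b') = 2} \<le> v - 1"
proof -
  have "card (b \<inter> b') \<noteq> 2" if "b \<in> B" "b' \<in> B - {b}" for b b'
  proof -
    have "card (b \<inter> b') + 2 < 4"
      using that by (intro IPPS_card_block_inter_less[OF assms(1) _ _ assms(3)]) auto
    then show ?thesis by simp
  qed
  then have no_pairs: "{b\<in>B. \<exists>b'\<in>B - {b}. card (b \<inter> b') = 2} = {}"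
    by blast
  show ?thesis unfolding no_pairs by simp
qed

end
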